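(* Let $a,b\in\mathbb{C}$ with $a\neq 0$. Let $y(x)=M(1;a;b;x)\in\mathbb{C}[[x]]$ be the master series with parameters $m=1$, $a$, $b$, i.e. $$y(x)=1+x+\sum_{\ell=2}^{\infty}\frac{x^{\ell}}{\ell!}\prod_{\gamma=1}^{\ell-1}(1-a\gamma+b\ell).$$ Then $y$ satisfies, as an identity of formal power series, $y^{a}=1+a\,x\,y^{b}$.
   Context: For $m,a,b\in\mathbb{C}$ the master series is the formal power series $M(m;a;b;x)=m+x+\sum_{\ell\ge 2}\frac{x^\ell}{\ell!}\prod_{\gamma=1}^{\ell-1}(m-a\gamma+b\ell)$. For a formal power series $f$ with constant term $1$ and $p\in\mathbb{C}$, $f^{p}$ denotes the formal power series $\exp(p\log f)$ (binomial series), so that $f^p$ has constant term $1$. *)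

theory Defs
  imports "HOL-Computational_Algebra.Formal_Power_Series"
begin

definition master_series :: "complex \<Rightarrow> complex \<Rightarrow> complex \<Rightarrow> complex fps" where
  "master_series m a b = Abs_fps (\<lambda>l. if l = 0 then m else if l = 1 then 1
      else (\<Prod>\<gamma>=1..l-1. m - a * of_nat \<gamma> + b * of_nat l) / of_nat (fact l))"

text \<open>Complex power of a power series with constant term 1, via the binomial series:
  f^p = (1 + (f - 1))^p = sum_n (p choose n) (f - 1)^n.\<close>
definition fps_cpow :: "complex fps \<Rightarrow> complex \<Rightarrow> complex fps" where
  "fps_cpow f p = fps_binomial p oo (f - 1)"

end

theory Submission
  imports Defs "HOL-Computational_Algebra.Polynomial"
begin

unbundle fps_syntax

text \<open>
  For a parameter p put
    c_n(p) = p / n! * \<Prod>j=1..n-1. (p + b n - a j)   (n \<ge> 1),   c_0(p) = 1,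
  and Q_p = \<Sum>n. c_n(p) x^n, so that Q_1 is the master series M(1;a;b;x).
  Each c_n(p) is a polynomial in p, and c_(n+1)(p + a - b) - c_(n+1)(p - b) = a c_n(p).
  By induction on n this makes the defect of the convolution identity Q_p Q_s = Q_(p+s)
  (a Hagen-Rothe identity) an a-periodic polynomial in p vanishing at 0, hence zero.
  So Q_m = Q_1^m for natural m; as the coefficients of Q_1^p are polynomials in p as well,
  Q_1^p = Q_p for every p.  Finally c_(n+1)(a) = a c_n(b), i.e. Q_a = 1 + a x Q_b.
\<close>

definition is_polyfun :: "('a::comm_ring_1 \<Rightarrow> 'a) \<Rightarrow> bool" where
  "is_polyfun f \<longleftrightarrow> (\<exists>P. \<forall>x. f x = poly P x)"

lemma is_polyfun_const: "is_polyfun (\<lambda>x. c)"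
  unfolding is_polyfun_def by (rule exI[of _ "[:c:]"]) auto

lemma is_polyfun_ident: "is_polyfun (\<lambda>x. x)"
  unfolding is_polyfun_def by (rule exI[of _ "[:0, 1:]"]) auto

lemma is_polyfun_add: "is_polyfun f \<Longrightarrow> is_polyfun g \<Longrightarrow> is_polyfun (\<lambda>x. f x + g x)"
  unfolding is_polyfun_def by (metis poly_add)

lemma is_polyfun_diff: "is_polyfun f \<Longrightarrow> is_polyfun g \<Longrightarrow> is_polyfun (\<lambda>x. f x - g x)"
  unfolding is_polyfun_def by (metis poly_diff)

lemma is_polyfun_mult: "is_polyfun f \<Longrightarrow> is_polyfun g \<Longrightarrow> is_polyfun (\<lambda>x. f x * g x)"
  unfolding is_polyfun_def by (metis poly_mult)

lemma is_polyfun_divide: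
  fixes f :: "'a::field \<Rightarrow> 'a"
  shows "is_polyfun f \<Longrightarrow> is_polyfun (\<lambda>x. f x / c)"
  using is_polyfun_mult[OF _ is_polyfun_const, of f "inverse c"] by (simp add: divide_inverse)

lemma is_polyfun_sum:
  "(\<And>i. i \<in> A \<Longrightarrow> is_polyfun (f i)) \<Longrightarrow> is_polyfun (\<lambda>x. \<Sum>i\<in>A. f i x)"
  by (induction A rule: infinite_finite_induct) (simp_all add: is_polyfun_const is_polyfun_add)

lemma is_polyfun_prod:
  "(\<And>i. i \<in> A \<Longrightarrow> is_polyfun (f i)) \<Longrightarrow> is_polyfun (\<lambda>x. \<Prod>i\<in>A. f i x)"
  by (induction A rule: infinite_finite_induct) (simp_all add: is_polyfun_const is_polyfun_mult)

lemmas is_polyfun_intros =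
  is_polyfun_const is_polyfun_ident is_polyfun_add is_polyfun_diff is_polyfun_mult
  is_polyfun_divide is_polyfun_sum is_polyfun_prod

lemma is_polyfun_eq_0_if_infinite_zeros:
  fixes f :: "'a::idom \<Rightarrow> 'a"
  assumes "is_polyfun f" "infinite S" "\<And>x. x \<in> S \<Longrightarrow> f x = 0"
  shows "f x = 0"
proof -
  obtain P where P: "\<And>x. f x = poly P x"
    using assms(1) unfolding is_polyfun_def by blast
  have "S \<subseteq> {x. poly P x = 0}"
    using assms(3) P by auto
  with assms(2) have "infinite {x. poly P x = 0}"
    using finite_subset by blast
  then have "P = 0"
    using poly_roots_finite by blast
  then show ?thesis
    using P by simp
qed

lemma is_polyfun_periodic_eq_0:
  fixes H :: "'a::{idom, ring_char_0} \<Rightarrow> 'a"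
  assumes "a \<noteq> 0" "is_polyfun H" "\<And>x. H (x + a) = H x" "H 0 = 0"
  shows "H x = 0"
proof (rule is_polyfun_eq_0_if_infinite_zeros[OF assms(2)])
  have "H (of_nat k * a) = 0" for k
  proof (induction k)
    case (Suc k)
    then show ?case
      using assms(3)[of "of_nat k * a"] by (simp add: algebra_simps)
  qed (use assms(4) in simp)
  then show "\<And>x. x \<in> range (\<lambda>k::nat. of_nat k * a) \<Longrightarrow> H x = 0"
    by auto
  have "inj (\<lambda>k::nat. of_nat k * a)"
    using assms(1) by (auto intro: injI)
  then show "infinite (range (\<lambda>k::nat. of_nat k * a))"
    using finite_imageD by blast
qed

lemma is_polyfun_fps_binomial_compose_nth:
  fixes g :: "'a::field_char_0 fps"
  shows "is_polyfun (\<lambda>p. (fps_binomial p oo g) $ n)"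
  unfolding fps_compose_nth fps_binomial_nth gbinomial_prod_rev by (intro is_polyfun_intros)

lemma fps_binomial_of_nat_compose:
  fixes y :: "'a::field_char_0 fps"
  assumes "y $ 0 = 1"
  shows "fps_binomial (of_nat m) oo (y - 1) = y ^ m"
proof -
  have "(1 + fps_X) oo (y - 1) = y"
    using assms by (simp add: fps_compose_add_distrib)
  then show ?thesis
    unfolding fps_binomial_of_nat using fps_compose_power[of "y - 1" "1 + fps_X" m] assms
    by simp
qed

definition master_power_coeff :: "'a::field_char_0 \<Rightarrow> 'a \<Rightarrow> 'a \<Rightarrow> nat \<Rightarrow> 'a" where
  "master_power_coeff a b p n = (if n = 0 then 1 else
     p * (\<Prod>j<n-1. p + b * of_nat n - a * of_nat (Suc j)) / fact n)"

lemma master_power_coeff_0 [simp]: "master_power_coeff a b p 0 = 1"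
  by (simp add: master_power_coeff_def)

lemma master_power_coeff_at_0: "n > 0 \<Longrightarrow> master_power_coeff a b 0 n = 0"
  by (simp add: master_power_coeff_def)

lemma master_power_coeff_shift_diff:
  "master_power_coeff a b (p + a - b) (Suc m) - master_power_coeff a b (p - b) (Suc m)
     = a * master_power_coeff a b p m"
proof (cases m)
  case 0
  then show ?thesis by (simp add: master_power_coeff_def)
next
  case (Suc k)
  define P where "P = (\<Prod>j<k. p + b * of_nat m - a * of_nat (Suc j))"
  have shifted_left: "(\<Prod>j<m. p + a - b + b * of_nat (Suc m) - a * of_nat (Suc j))
      = (p + b * of_nat m) * P"
    unfolding Suc prod.lessThan_Suc_shift P_def by (simp add: algebra_simps)
  have shifted_right: "(\<Prod>j<m. p - b + b * of_nat (Suc m) - a * of_nat (Suc j))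
      = P * (p + b * of_nat m - a * of_nat m)"
    unfolding Suc prod.lessThan_Suc P_def by (simp add: algebra_simps)
  have "master_power_coeff a b (p + a - b) (Suc m) - master_power_coeff a b (p - b) (Suc m)
      = ((p + a - b) * ((p + b * of_nat m) * P)
          - (p - b) * (P * (p + b * of_nat m - a * of_nat m))) / fact (Suc m)"
    by (simp add: master_power_coeff_def shifted_left shifted_right diff_divide_distrib
        del: of_nat_Suc)
  also have "\<dots> = of_nat (Suc m) * (a * p * P) / (of_nat (Suc m) * fact m)"
    unfolding fact_Suc of_nat_mult by (simp add: algebra_simps)
  also have "\<dots> = a * master_power_coeff a b p m"
    using Suc by (simp add: master_power_coeff_def P_def del: of_nat_Suc)
  finally show ?thesis .
qed

lemma master_power_coeff_Suc_at_a:
  "master_power_coeff a b a (Suc m) = a * master_power_coeff a b b m"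
proof (cases m)
  case 0
  then show ?thesis by (simp add: master_power_coeff_def)
next
  case (Suc k)
  define P where "P = (\<Prod>j<k. b * of_nat (Suc m) - a * of_nat (Suc j))"
  have "(\<Prod>j<m. a + b * of_nat (Suc m) - a * of_nat (Suc j)) = b * of_nat (Suc m) * P"
    unfolding Suc prod.lessThan_Suc_shift P_def by (simp add: algebra_simps)
  moreover have P_at_b: "(\<Prod>j<k. b + b * of_nat (Suc k) - a * of_nat (Suc j)) = P"
    unfolding P_def Suc by (simp add: algebra_simps)
  ultimately have "master_power_coeff a b a (Suc m)
      = of_nat (Suc m) * (a * b * P) / (of_nat (Suc m) * fact m)"
    unfolding master_power_coeff_def fact_Suc of_nat_mult by (simp add: algebra_simps)
  also have "\<dots> = a * master_power_coeff a b b m"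
    using Suc P_at_b by (simp add: master_power_coeff_def del: of_nat_Suc)
  finally show ?thesis .
qed

lemma is_polyfun_master_power_coeff:
  "is_polyfun g \<Longrightarrow> is_polyfun (\<lambda>x. master_power_coeff a b (g x) n)"
  unfolding master_power_coeff_def by (cases "n = 0") (auto intro!: is_polyfun_intros)

lemma master_power_coeff_convolution:
  assumes "a \<noteq> 0"
  shows "(\<Sum>k=0..n. master_power_coeff a b p k * master_power_coeff a b s (n - k))
    = master_power_coeff a b (p + s) n"
proof (induction n arbitrary: p)
  case 0
  then show ?case by simp
next
  case (Suc n)
  let ?c = "master_power_coeff a b"
  define H where "H p = (\<Sum>k=0..Suc n. ?c p k * ?c s (Suc n - k)) - ?c (p + s) (Suc n)" for p
  have H_shift: "H p = ?c s (Suc n) + (\<Sum>j=0..n. ?c p (Suc j) * ?c s (n - j)) - ?c (p + s) (Suc n)"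
    for p
    unfolding H_def by (subst sum.atLeast0_atMost_Suc_shift) simp
  have "H (x + a) = H x" for x
  proof -
    have "H (x + a) - H x
        = (\<Sum>j=0..n. (?c ((x + b) + a - b) (Suc j) - ?c ((x + b) - b) (Suc j)) * ?c s (n - j))
          - (?c ((x + b + s) + a - b) (Suc n) - ?c ((x + b + s) - b) (Suc n))"
      unfolding H_shift by (simp add: algebra_simps sum_subtractf[symmetric])
    also have "\<dots> = (\<Sum>j=0..n. a * ?c (x + b) j * ?c s (n - j)) - a * ?c (x + b + s) n"
      by (simp only: master_power_coeff_shift_diff)
    also have "\<dots> = a * ((\<Sum>j=0..n. ?c (x + b) j * ?c s (n - j)) - ?c (x + b + s) n)"
      by (simp add: sum_distrib_left algebra_simps)
    also have "\<dots> = 0"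
      using Suc.IH[of "x + b"] by simp
    finally show ?thesis by simp
  qed
  moreover have "is_polyfun H"
    unfolding H_def by (intro is_polyfun_intros is_polyfun_master_power_coeff)
  moreover have "H 0 = 0"
    unfolding H_shift by (simp add: master_power_coeff_at_0)
  ultimately have "H p = 0"
    using is_polyfun_periodic_eq_0[OF assms] by blast
  then show ?case
    unfolding H_def by simp
qed

definition master_power :: "'a::field_char_0 \<Rightarrow> 'a \<Rightarrow> 'a \<Rightarrow> 'a fps" where
  "master_power a b p = Abs_fps (master_power_coeff a b p)"

lemma master_power_add:
  "a \<noteq> 0 \<Longrightarrow> master_power a b p * master_power a b s = master_power a b (p + s)"
  by (simp add: fps_eq_iff fps_mult_nth master_power_def master_power_coeff_convolution)

lemma master_power_of_nat:
  assumes "a \<noteq> 0"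
  shows "master_power a b (of_nat m) = master_power a b 1 ^ m"
proof (induction m)
  case 0
  then show ?case
    by (auto simp: fps_eq_iff master_power_def master_power_coeff_at_0)
next
  case (Suc m)
  then show ?case
    using master_power_add[OF assms, of b 1 "of_nat m"] by (simp add: add.commute)
qed

lemma fps_binomial_compose_master_power:
  assumes "a \<noteq> 0"
  shows "fps_binomial p oo (master_power a b 1 - 1) = master_power a b p"
proof (rule fps_ext)
  fix n
  let ?f = "\<lambda>p. (fps_binomial p oo (master_power a b 1 - 1)) $ n - master_power a b p $ n"
  have "is_polyfun ?f"
    unfolding master_power_def fps_nth_Abs_fps
    by (intro is_polyfun_diff is_polyfun_fps_binomial_compose_nth
        is_polyfun_master_power_coeff is_polyfun_ident)
  moreover have "infinite (range (of_nat :: nat \<Rightarrow> 'a))"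
    using finite_imageD inj_of_nat by blast
  moreover have "?f (of_nat m) = 0" for m
  proof -
    have "master_power a b 1 $ 0 = 1"
      by (simp add: master_power_def)
    then show ?thesis
      by (simp add: fps_binomial_of_nat_compose master_power_of_nat[OF assms])
  qed
  then have "?f x = 0" if "x \<in> range of_nat" for x
    using that by auto
  ultimately have "?f p = 0"
    by (rule is_polyfun_eq_0_if_infinite_zeros)
  then show "(fps_binomial p oo (master_power a b 1 - 1)) $ n = master_power a b p $ n"
    by simp
qed

lemma master_power_at_a: "master_power a b a = 1 + fps_const a * fps_X * master_power a b b"
proof (rule fps_ext)
  fix n
  show "master_power a b a $ n = (1 + fps_const a * fps_X * master_power a b b) $ n"
    by (cases n) (simp_all add: master_power_def master_power_coeff_Suc_at_a mult.assoc)
qed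

lemma master_series_eq_master_power: "master_series 1 a b = master_power a b 1"
proof (rule fps_ext)
  fix n
  show "master_series 1 a b $ n = master_power a b 1 $ n"
  proof (cases "n \<le> 1")
    case True
    then consider "n = 0" | "n = 1" by linarith
    then show ?thesis
      by cases (simp_all add: master_series_def master_power_def master_power_coeff_def)
  next
    case False
    then show ?thesis
      unfolding master_series_def master_power_def master_power_coeff_def
      by (simp add: prod.atLeast1_atMost_eq algebra_simps)
  qed
qed

theorem mainTheorem1:
  fixes a b :: complex
  assumes "a \<noteq> 0"
  shows "fps_cpow (master_series 1 a b) a = 1 + fps_const a * fps_X * fps_cpow (master_series 1 a b) b"
  unfolding fps_cpow_def master_series_eq_master_power fps_binomial_compose_master_power[OF assms]
  by (rule master_power_at_a)

end
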